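(* Let $d\ge 2$ and suppose $\mathbb{C}^d$ admits a complete set of mutually unbiased bases, i.e. rank-one projectors $\Pi^j_i$, $j=1,\dots,d+1$, $i=1,\dots,d$, with ${\rm tr}(\Pi^j_i\Pi^j_k)=\delta_{ik}$ and ${\rm tr}(\Pi^j_i\Pi^l_k)=\frac1d$ whenever $j\ne l$. Then for all $X\in{\cal L}(\mathbb{C}^d)$, $$\sum_{i,j}\frac{1}{d(d+1)}\Pi^j_iX\Pi^j_i=\frac{1}{d(d+1)}\Big(({\rm tr}\,X)I+X\Big),$$ and consequently the ensemble ${\cal P}=\{\Pi^j_i,\frac{1}{d(d+1)}\}$ has accessible fidelity $F_{\cal P}=\frac{2}{d+1}$.
   Context: ${\cal L}(\mathbb{C}^d)$ is the space of linear operators on $\mathbb{C}^d$. For an ensemble ${\cal P}=\{\Pi_k,\pi_k\}$ of pure states, a POVM ${\cal E}=\{E_b\}$ and a reproduction strategy ${\cal M}:b\mapsto\sigma_b$ (density operators), the average fidelity is $F_{\cal P}({\cal E},{\cal M})=\sum_{b,k}\pi_k\,{\rm tr}(\Pi_kE_b)\,{\rm tr}(\Pi_k\sigma_b)$, and the accessible fidelity is $F_{\cal P}=\sup_{{\cal E},{\cal M}}F_{\cal P}({\cal E},{\cal M})$. *)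

theory Defs
  imports "Jordan_Normal_Form.Matrix"
begin

definition mtrace :: "complex mat \<Rightarrow> complex" where
  "mtrace A = (\<Sum>i<dim_row A. A $$ (i,i))"

definition msum :: "nat \<Rightarrow> ('a \<Rightarrow> complex mat) \<Rightarrow> 'a set \<Rightarrow> complex mat" where
  "msum d f A = mat d d (\<lambda>(r,c). \<Sum>a\<in>A. f a $$ (r,c))"

definition quad_form :: "nat \<Rightarrow> complex mat \<Rightarrow> complex vec \<Rightarrow> complex" where
  "quad_form d A v = (\<Sum>i<d. \<Sum>j<d. cnj (v $ i) * A $$ (i,j) * v $ j)"

definition psd :: "nat \<Rightarrow> complex mat \<Rightarrow> bool" where
  "psd d A \<longleftrightarrow> A \<in> carrier_mat d d \<and>
     (\<forall>v\<in>carrier_vec d. Im (quad_form d A v) = 0 \<and> Re (quad_form d A v) \<ge> 0)"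

definition density_op :: "nat \<Rightarrow> complex mat \<Rightarrow> bool" where
  "density_op d \<sigma> \<longleftrightarrow> psd d \<sigma> \<and> mtrace \<sigma> = 1"

definition rank_one_projector :: "nat \<Rightarrow> complex mat \<Rightarrow> bool" where
  "rank_one_projector d P \<longleftrightarrow> (\<exists>v\<in>carrier_vec d. (\<Sum>i<d. (cmod (v $ i))\<^sup>2) = 1 \<and>
      P = mat d d (\<lambda>(i,j). v $ i * cnj (v $ j)))"

definition povm :: "nat \<Rightarrow> nat set \<Rightarrow> (nat \<Rightarrow> complex mat) \<Rightarrow> bool" where
  "povm d B E \<longleftrightarrow> finite B \<and> (\<forall>b\<in>B. psd d (E b)) \<and> msum d E B = 1\<^sub>m d"

definition avg_fidelity ::
  "'k set \<Rightarrow> ('k \<Rightarrow> complex mat) \<Rightarrow> ('k \<Rightarrow> real) \<Rightarrow> nat set \<Rightarrow> (nat \<Rightarrow> complex mat)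
     \<Rightarrow> (nat \<Rightarrow> complex mat) \<Rightarrow> real" where
  "avg_fidelity K Proj p B E \<sigma> =
     Re (\<Sum>b\<in>B. \<Sum>k\<in>K. complex_of_real (p k) * mtrace (Proj k * E b) * mtrace (Proj k * \<sigma> b))"

definition accessible_fidelity ::
  "nat \<Rightarrow> 'k set \<Rightarrow> ('k \<Rightarrow> complex mat) \<Rightarrow> ('k \<Rightarrow> real) \<Rightarrow> real" where
  "accessible_fidelity d K Proj p = Sup {avg_fidelity K Proj p B E \<sigma> | B E \<sigma>.
      povm d B E \<and> (\<forall>b\<in>B. density_op d (\<sigma> b))}"

end

theory Submission
  imports Defs
begin

(* The d(d+1) projectors P_k of a complete set of mutually unbiased bases form a 2-design:
   sum_k P_k (x) P_k = I + SWAP. Indeed, the squared Hilbert-Schmidt distance between the two sides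
   is the frame potential sum_{k,l} tr(P_k P_l)^2 minus its least possible value 2 d (d+1), and the
   MUB relations give exactly that value. Contracting the design identity with X, resp. with
   E (x) sigma, yields sum_k P_k X P_k = tr(X) I + X and
   sum_k tr(P_k E) tr(P_k sigma) = tr(E sigma) + tr E tr sigma. As tr(E sigma) <= tr E tr sigma for
   positive E and sigma, and the POVM elements have total trace d, the fidelity is at most
   2 d / (d (d+1)) = 2 / (d+1); measuring in the standard basis and preparing the observed basis
   vector attains this value. *)

definition hermitian :: "nat \<Rightarrow> complex mat \<Rightarrow> bool" where
  "hermitian d A \<longleftrightarrow> A \<in> carrier_mat d d \<and> (\<forall>i<d. \<forall>j<d. A $$ (j, i) = cnj (A $$ (i, j)))"

lemma hermitianD:
  assumes "hermitian d A"
  shows "A \<in> carrier_mat d d" "i < d \<Longrightarrow> j < d \<Longrightarrow> A $$ (j, i) = cnj (A $$ (i, j))"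
  using assms unfolding hermitian_def by blast+

lemma if_zero_mult: "(if P then a else 0) * b = (if P then a * b else (0::'a::mult_zero))" by simp
lemma mult_if_zero: "b * (if P then a else 0) = (if P then b * a else (0::'a::mult_zero))" by simp

lemma index_msum [simp]:
  "a < d \<Longrightarrow> b < d \<Longrightarrow> msum d f K $$ (a, b) = (\<Sum>k\<in>K. f k $$ (a, b))"
  by (simp add: msum_def)

lemma dim_msum [simp]: "dim_row (msum d f K) = d" "dim_col (msum d f K) = d"
  by (simp_all add: msum_def)

lemma msum_smult:
  assumes "\<And>k. k \<in> K \<Longrightarrow> f k \<in> carrier_mat d d"
  shows "msum d (\<lambda>k. c \<cdot>\<^sub>m f k) K = c \<cdot>\<^sub>m msum d f K"
proof (rule eq_matI)
  fix i j assume "i < dim_row (c \<cdot>\<^sub>m msum d f K)" "j < dim_col (c \<cdot>\<^sub>m msum d f K)"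
  then have "i < d" "j < d" by simp_all
  with assms show "msum d (\<lambda>k. c \<cdot>\<^sub>m f k) K $$ (i, j) = (c \<cdot>\<^sub>m msum d f K) $$ (i, j)"
    by (simp add: sum_distrib_left, intro sum.cong refl) (metis carrier_matD index_smult_mat(1))
qed simp_all

lemma of_nat_mult_Suc_neq_0: "0 < d \<Longrightarrow> (of_nat d * (of_nat d + 1) :: complex) \<noteq> 0"
  by (metis add.commute mult_eq_0_iff of_nat_Suc of_nat_eq_0_iff nat.distinct(1) not_gr0)

lemma mtrace_one_mat: "mtrace (1\<^sub>m d) = of_nat d"
  by (simp add: mtrace_def)

lemma mtrace_msum:
  assumes "\<And>k. k \<in> K \<Longrightarrow> f k \<in> carrier_mat d d"
  shows "mtrace (msum d f K) = (\<Sum>k\<in>K. mtrace (f k))"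
proof -
  have "mtrace (msum d f K) = (\<Sum>i<d. \<Sum>k\<in>K. f k $$ (i, i))"
    by (simp add: mtrace_def)
  also have "\<dots> = (\<Sum>k\<in>K. mtrace (f k))"
    using assms by (subst sum.swap) (auto simp: mtrace_def intro!: sum.cong)
  finally show ?thesis .
qed

lemma mtrace_mult:
  assumes "A \<in> carrier_mat d d" "B \<in> carrier_mat d d"
  shows "mtrace (A * B) = (\<Sum>i<d. \<Sum>j<d. A $$ (i, j) * B $$ (j, i))"
  using assms by (simp add: mtrace_def scalar_prod_def atLeast0LessThan)

lemma mtrace_mult_hermitian:
  assumes "hermitian d A" "hermitian d B"
  shows "mtrace (A * B) = (\<Sum>i<d. \<Sum>j<d. A $$ (i, j) * cnj (B $$ (i, j)))"
  unfolding mtrace_mult[OF assms[THEN hermitianD(1)]]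
  by (intro sum.cong refl) (metis lessThan_iff hermitianD(2)[OF assms(2)])

lemma index_mult_mult_mat:
  assumes "A \<in> carrier_mat d d" "X \<in> carrier_mat d d" "B \<in> carrier_mat d d" "a < d" "e < d"
  shows "(A * X * B) $$ (a, e) = (\<Sum>b<d. \<Sum>c<d. A $$ (a, b) * X $$ (b, c) * B $$ (c, e))"
  using assms by (simp add: scalar_prod_def atLeast0LessThan sum_distrib_left mult.assoc)

section \<open>Positive semidefinite matrices and rank-one projectors\<close>

lemma quad_form_unit_vec:
  assumes "i < d"
  shows "quad_form d A (unit_vec d i) = A $$ (i, i)"
  using assms by (simp add: quad_form_def if_distrib[of cnj] if_zero_mult mult_if_zero cong: if_cong)

lemma quad_form_two_coords:
  assumes "i < d" "j < d" "i \<noteq> j"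
  shows "quad_form d A (x \<cdot>\<^sub>v unit_vec d i + y \<cdot>\<^sub>v unit_vec d j) =
    cnj x * A $$ (i, i) * x + cnj x * A $$ (i, j) * y + cnj y * A $$ (j, i) * x + cnj y * A $$ (j, j) * y"
proof -
  have "quad_form d A (x \<cdot>\<^sub>v unit_vec d i + y \<cdot>\<^sub>v unit_vec d j) =
      (\<Sum>p<d. \<Sum>q<d. cnj ((if p = i then x else 0) + (if p = j then y else 0)) * A $$ (p, q)
         * ((if q = i then x else 0) + (if q = j then y else 0)))"
    unfolding quad_form_def by (intro sum.cong refl) (auto simp: unit_vec_def)
  also have "\<dots> = (\<Sum>p<d. \<Sum>q<d.
       (if p = i then cnj x else 0) * A $$ (p, q) * (if q = i then x else 0) +
       (if p = i then cnj x else 0) * A $$ (p, q) * (if q = j then y else 0) +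
       (if p = j then cnj y else 0) * A $$ (p, q) * (if q = i then x else 0) +
       (if p = j then cnj y else 0) * A $$ (p, q) * (if q = j then y else 0))"
    by (intro sum.cong refl) (simp add: algebra_simps)
  also have "\<dots> = cnj x * A $$ (i, i) * x + cnj x * A $$ (i, j) * y + cnj y * A $$ (j, i) * x + cnj y * A $$ (j, j) * y"
    using assms by (simp add: sum.distrib if_zero_mult mult_if_zero)
  finally show ?thesis .
qed

lemma psd_diag:
  assumes "psd d A" "i < d"
  shows "Im (A $$ (i, i)) = 0" "Re (A $$ (i, i)) \<ge> 0"
  using assms quad_form_unit_vec[of i d A] unit_vec_carrier[of d i] unfolding psd_def by metis+

lemma psd_hermitian:
  assumes "psd d A"
  shows "hermitian d A"
  unfolding hermitian_def
proof (intro conjI allI impI)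
  show "A \<in> carrier_mat d d" using assms by (simp add: psd_def)
  fix i j assume i: "i < d" and j: "j < d"
  show "A $$ (j, i) = cnj (A $$ (i, j))"
  proof (cases "i = j")
    case True
    then show ?thesis using psd_diag[OF assms i] by (simp add: complex_eq_iff)
  next
    case False
    have "Im (quad_form d A (x \<cdot>\<^sub>v unit_vec d i + y \<cdot>\<^sub>v unit_vec d j)) = 0" for x y
      using assms unfolding psd_def by simp
    note form = this[unfolded quad_form_two_coords[OF i j False]]
    from form[of 1 1] form[of 1 \<i>] have "Im (A $$ (i, j)) + Im (A $$ (j, i)) = 0"
      and "Re (A $$ (i, j)) - Re (A $$ (j, i)) = 0"
      using psd_diag[OF assms i] psd_diag[OF assms j]
      by simp_all
    then show ?thesis
      by (simp add: complex_eq_iff)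
  qed
qed

lemma nonneg_quadratic_imp_discriminant_le:
  fixes a b r :: real
  assumes "0 \<le> a" and nonneg: "\<And>t. 0 \<le> a * t\<^sup>2 - 2 * r * t + b"
  shows "r\<^sup>2 \<le> a * b"
proof (cases "a = 0")
  case True
  have "r = 0"
  proof (rule ccontr)
    assume "r \<noteq> 0"
    then show False
      using nonneg[of "(b + 1) / (2 * r)"] True by (simp add: field_simps)
  qed
  then show ?thesis using True by simp
next
  case False
  then show ?thesis
    using nonneg[of "r / a"] \<open>0 \<le> a\<close> by (simp add: field_simps power2_eq_square)
qed

lemma psd_entry_bound:
  assumes "psd d A" "i < d" "j < d"
  shows "(cmod (A $$ (i, j)))\<^sup>2 \<le> Re (A $$ (i, i)) * Re (A $$ (j, j))"
proof (cases "i = j")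
  case True
  then show ?thesis
    using psd_diag[OF assms(1,2)] by (simp add: cmod_power2) (simp add: power2_eq_square)
next
  case False
  define a where "a = Re (A $$ (i, i))"
  define b where "b = Re (A $$ (j, j))"
  define z where "z = A $$ (i, j)"
  define r where "r = (cmod z)\<^sup>2"
  have A_ii: "A $$ (i, i) = of_real a" and A_jj: "A $$ (j, j) = of_real b"
    using psd_diag[OF assms(1,2)] psd_diag[OF assms(1,3)] by (simp_all add: a_def b_def complex_eq_iff)
  have A_ji: "A $$ (j, i) = cnj z"
    using hermitianD(2)[OF psd_hermitian[OF assms(1)] assms(2,3)] by (simp add: z_def)
  have "0 \<le> a * t\<^sup>2 - 2 * r * t + b * r" for t
  proof -
    \<comment> \<open>positivity at \<open>t e\<^sub>i - z\<^sup>* e\<^sub>j\<close> for all real \<open>t\<close>; the discriminant then gives the bound\<close>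
    let ?v = "complex_of_real t \<cdot>\<^sub>v unit_vec d i + (- cnj z) \<cdot>\<^sub>v unit_vec d j"
    have "quad_form d A ?v = of_real t * of_real t * of_real a - 2 * of_real t * (z * cnj z) + z * cnj z * of_real b"
      by (simp add: quad_form_two_coords[OF assms(2,3) False] A_ii A_jj A_ji z_def[symmetric] algebra_simps)
    also have "\<dots> = of_real (a * t\<^sup>2 - 2 * r * t + b * r)"
      unfolding complex_norm_square[symmetric] r_def by (simp add: power2_eq_square algebra_simps)
    finally have "quad_form d A ?v = of_real (a * t\<^sup>2 - 2 * r * t + b * r)" .
    moreover have "0 \<le> Re (quad_form d A ?v)"
      using assms(1) unfolding psd_def by simp
    ultimately show ?thesis
      by simp
  qed
  then have "r\<^sup>2 \<le> a * (b * r)"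
    by (intro nonneg_quadratic_imp_discriminant_le) (use psd_diag(2)[OF assms(1,2)] a_def in auto)
  moreover have "0 \<le> a * b"
    using psd_diag(2)[OF assms(1,2)] psd_diag(2)[OF assms(1,3)] by (simp add: a_def b_def)
  ultimately have "r \<le> a * b"
    by (cases "r = 0") (simp_all add: r_def power2_eq_square mult.assoc[symmetric] mult_le_cancel_right)
  then show ?thesis
    by (simp add: r_def a_def b_def z_def)
qed

lemma psd_Re_mtrace_mult_le:
  assumes E: "psd d E" and S: "psd d S"
  shows "Re (mtrace (E * S)) \<le> Re (mtrace E) * Re (mtrace S)"
proof -
  have Ec: "E \<in> carrier_mat d d" and Sc: "S \<in> carrier_mat d d"
    using E S by (simp_all add: psd_def)
  define e where "e i = Re (E $$ (i, i))" for i
  define s where "s i = Re (S $$ (i, i))" for i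
  have e0: "0 \<le> e i" and s0: "0 \<le> s i" if "i < d" for i
    using that psd_diag(2) E S by (simp_all add: e_def s_def)
  have entry: "Re (E $$ (i, j) * S $$ (j, i)) \<le> (e i * s j + e j * s i) / 2" if "i < d" "j < d" for i j
  proof -
    have "(cmod (E $$ (i, j)))\<^sup>2 \<le> e i * e j" "(cmod (S $$ (j, i)))\<^sup>2 \<le> s j * s i"
      unfolding e_def s_def using that by (auto intro: psd_entry_bound E S)
    then have "(cmod (E $$ (i, j)) * cmod (S $$ (j, i)))\<^sup>2 \<le> (e i * e j) * (s j * s i)"
      unfolding power_mult_distrib using that e0 s0 by (intro mult_mono) auto
    then have "cmod (E $$ (i, j)) * cmod (S $$ (j, i)) \<le> sqrt ((e i * s j) * (e j * s i))"
      by (intro real_le_rsqrt) (simp add: algebra_simps)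
    also have "\<dots> \<le> (e i * s j + e j * s i) / 2"
      using that e0 s0 by (intro arith_geo_mean_sqrt) simp_all
    finally show ?thesis
      using complex_Re_le_cmod[of "E $$ (i, j) * S $$ (j, i)"] by (simp add: norm_mult)
  qed
  have "Re (mtrace (E * S)) = (\<Sum>i<d. \<Sum>j<d. Re (E $$ (i, j) * S $$ (j, i)))"
    by (simp add: mtrace_mult[OF Ec Sc] Re_sum)
  also have "\<dots> \<le> (\<Sum>i<d. \<Sum>j<d. (e i * s j + e j * s i) / 2)"
    using entry by (intro sum_mono) simp
  also have "\<dots> = ((\<Sum>i<d. \<Sum>j<d. e i * s j) + (\<Sum>i<d. \<Sum>j<d. e j * s i)) / 2"
    by (simp only: sum.distrib add_divide_distrib sum_divide_distrib)
  also have "(\<Sum>i<d. \<Sum>j<d. e j * s i) = (\<Sum>i<d. \<Sum>j<d. e i * s j)"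
    by (rule sum.swap)
  also have "((\<Sum>i<d. \<Sum>j<d. e i * s j) + (\<Sum>i<d. \<Sum>j<d. e i * s j)) / 2 = (\<Sum>i<d. e i) * (\<Sum>j<d. s j)"
    by (simp add: sum_product)
  also have "\<dots> = Re (mtrace E) * Re (mtrace S)"
    using Ec Sc by (simp add: mtrace_def Re_sum e_def s_def)
  finally show ?thesis .
qed

lemma rank_one_projectorE:
  assumes "rank_one_projector d P"
  obtains v where "v \<in> carrier_vec d" "(\<Sum>i<d. v $ i * cnj (v $ i)) = 1"
    "P = mat d d (\<lambda>(i, j). v $ i * cnj (v $ j))"
proof -
  obtain v where v: "v \<in> carrier_vec d" "(\<Sum>i<d. (cmod (v $ i))\<^sup>2) = 1"
    "P = mat d d (\<lambda>(i, j). v $ i * cnj (v $ j))"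
    using assms unfolding rank_one_projector_def by blast
  have "(\<Sum>i<d. v $ i * cnj (v $ i)) = of_real (\<Sum>i<d. (cmod (v $ i))\<^sup>2)"
    by (simp only: of_real_sum complex_norm_square)
  with v that show ?thesis
    by simp
qed

lemma rank_one_projector_hermitian: "rank_one_projector d P \<Longrightarrow> hermitian d P"
  by (elim rank_one_projectorE) (simp add: hermitian_def)

lemma mtrace_rank_one_projector: "rank_one_projector d P \<Longrightarrow> mtrace P = 1"
  by (elim rank_one_projectorE) (simp add: mtrace_def)

lemma rank_one_projector_mult_self:
  assumes "rank_one_projector d P"
  shows "P * P = P"
proof -
  obtain v where v: "v \<in> carrier_vec d" and unit: "(\<Sum>k<d. v $ k * cnj (v $ k)) = 1"
    and P: "P = mat d d (\<lambda>(i, j). v $ i * cnj (v $ j))"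
    using assms by (rule rank_one_projectorE)
  have "(\<Sum>k<d. v $ i * cnj (v $ k) * (v $ k * cnj (v $ j))) = v $ i * cnj (v $ j) * (\<Sum>k<d. v $ k * cnj (v $ k))"
    for i j
    by (simp add: sum_distrib_left algebra_simps)
  then show ?thesis
    unfolding P using unit by (intro eq_matI) (simp_all add: scalar_prod_def atLeast0LessThan)
qed

lemma rank_one_projector_psd:
  assumes "rank_one_projector d P"
  shows "psd d P"
proof -
  obtain v where P: "P = mat d d (\<lambda>(i, j). v $ i * cnj (v $ j))"
    using assms by (rule rank_one_projectorE)
  have "quad_form d P w = (\<Sum>i<d. cnj (w $ i) * v $ i) * cnj (\<Sum>i<d. cnj (w $ i) * v $ i)" for w
    unfolding quad_form_def P by (simp add: sum_product cnj_sum algebra_simps)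
  then have "quad_form d P w = of_real ((cmod (\<Sum>i<d. cnj (w $ i) * v $ i))\<^sup>2)" for w
    by (simp only: complex_norm_square)
  then show ?thesis
    by (simp add: psd_def P)
qed

definition basis_proj :: "nat \<Rightarrow> nat \<Rightarrow> complex mat" where
  "basis_proj d b = mat d d (\<lambda>(i, j). unit_vec d b $ i * cnj (unit_vec d b $ j))"

lemma rank_one_projector_basis_proj:
  assumes "b < d"
  shows "rank_one_projector d (basis_proj d b)"
proof -
  have "(\<Sum>i<d. (cmod (unit_vec d b $ i))\<^sup>2) = (\<Sum>i<d. if b = i then 1 else 0)"
    by (intro sum.cong refl) (simp add: unit_vec_def)
  with assms show ?thesis
    unfolding rank_one_projector_def basis_proj_def by (intro bexI[of _ "unit_vec d b"] conjI) simp_all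
qed

lemma msum_basis_proj: "msum d (basis_proj d) {..<d} = 1\<^sub>m d"
  by (intro eq_matI) (simp_all add: basis_proj_def if_distrib[of cnj] if_zero_mult mult_if_zero cong: if_cong)

section \<open>Two-designs\<close>

(* Four-index tensors are entries of operators on C^d (x) C^d, indexed so that P (x) Q has entry
   P_ab Q_ce at ((a,c),(b,e)). In this indexing tensor_square A is A (x) A, second_moment K P is
   sum_k P_k (x) P_k and id_plus_swap is I + SWAP. *)

definition tensor_square :: "complex mat \<Rightarrow> nat \<Rightarrow> nat \<Rightarrow> nat \<Rightarrow> nat \<Rightarrow> complex" where
  "tensor_square A a b c e = A $$ (a, b) * A $$ (c, e)"

definition second_moment :: "'k set \<Rightarrow> ('k \<Rightarrow> complex mat) \<Rightarrow> nat \<Rightarrow> nat \<Rightarrow> nat \<Rightarrow> nat \<Rightarrow> complex" where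
  "second_moment K P a b c e = (\<Sum>k\<in>K. tensor_square (P k) a b c e)"

definition id_plus_swap :: "nat \<Rightarrow> nat \<Rightarrow> nat \<Rightarrow> nat \<Rightarrow> complex" where
  "id_plus_swap a b c e = (if a = b \<and> c = e then 1 else 0) + (if a = e \<and> b = c then 1 else 0)"

lemma sum4_mult_identity:
  "(\<Sum>a<(d::nat). \<Sum>b<d. \<Sum>c<d. \<Sum>e<d. F a b c e * (if a = b \<and> c = e then 1 else 0 :: complex)) =
   (\<Sum>a<d. \<Sum>c<d. F a a c c)"
proof (rule sum.cong[OF refl])
  fix a assume a: "a \<in> {..<d}"
  have "(\<Sum>c<d. \<Sum>e<d. F a b c e * (if a = b \<and> c = e then 1 else 0 :: complex)) =
      (if b = a then \<Sum>c<d. F a a c c else 0)" for b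
    by (cases "b = a") (simp_all add: mult_if_zero)
  with a show "(\<Sum>b<d. \<Sum>c<d. \<Sum>e<d. F a b c e * (if a = b \<and> c = e then 1 else 0)) =
      (\<Sum>c<d. F a a c c :: complex)"
    by simp
qed

lemma sum4_mult_swap:
  "(\<Sum>a<(d::nat). \<Sum>b<d. \<Sum>c<d. \<Sum>e<d. F a b c e * (if a = e \<and> b = c then 1 else 0 :: complex)) =
   (\<Sum>a<d. \<Sum>b<d. F a b b a)"
proof (intro sum.cong refl)
  fix a b assume a: "a \<in> {..<d}" and b: "b \<in> {..<d}"
  have "(\<Sum>e<d. F a b c e * (if a = e \<and> b = c then 1 else 0 :: complex)) =
      (if c = b then F a b b a else 0)" for c
    using a by (cases "c = b") (simp_all add: mult_if_zero)
  with b show "(\<Sum>c<d. \<Sum>e<d. F a b c e * (if a = e \<and> b = c then 1 else 0 :: complex)) = F a b b a"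
    by simp
qed

lemma sum4_mult_id_plus_swap:
  "(\<Sum>a<(d::nat). \<Sum>b<d. \<Sum>c<d. \<Sum>e<d. F a b c e * id_plus_swap a b c e) =
   (\<Sum>a<d. \<Sum>c<d. F a a c c) + (\<Sum>a<d. \<Sum>b<d. F a b b a)"
  by (simp only: id_plus_swap_def distrib_left sum.distrib sum4_mult_identity sum4_mult_swap)

lemma sum2_mult_id_plus_swap:
  assumes "X \<in> carrier_mat d d" "a < d" "e < d"
  shows "(\<Sum>b<d. \<Sum>c<d. X $$ (b, c) * id_plus_swap a b c e) = X $$ (a, e) + (if a = e then mtrace X else 0)"
proof -
  have "(\<Sum>b<d. \<Sum>c<d. X $$ (b, c) * (if a = b \<and> c = e then 1 else 0)) = X $$ (a, e)"
  proof -
    have "(\<Sum>c<d. X $$ (b, c) * (if a = b \<and> c = e then 1 else 0)) = (if b = a then X $$ (a, e) else 0)" for b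
      using assms(3) by (cases "b = a") (simp_all add: mult_if_zero)
    with assms(2) show ?thesis
      by simp
  qed
  moreover have "(\<Sum>b<d. \<Sum>c<d. X $$ (b, c) * (if a = e \<and> b = c then 1 else 0)) = (if a = e then mtrace X else 0)"
  proof (cases "a = e")
    case True
    have "(\<Sum>c<d. X $$ (b, c) * (if b = c then 1 else 0)) = X $$ (b, b)" if "b < d" for b
      using that by (simp add: mult_if_zero)
    with True assms(1) show ?thesis
      by (simp add: mtrace_def)
  qed simp
  ultimately show ?thesis
    by (simp add: id_plus_swap_def distrib_left sum.distrib)
qed

definition tensor_inner ::
  "nat \<Rightarrow> (nat \<Rightarrow> nat \<Rightarrow> nat \<Rightarrow> nat \<Rightarrow> complex) \<Rightarrow> (nat \<Rightarrow> nat \<Rightarrow> nat \<Rightarrow> nat \<Rightarrow> complex) \<Rightarrow> complex"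
  where "tensor_inner d F G = (\<Sum>a<d. \<Sum>b<d. \<Sum>c<d. \<Sum>e<d. F a b c e * cnj (G a b c e))"

definition frame_potential :: "'k set \<Rightarrow> ('k \<Rightarrow> complex mat) \<Rightarrow> complex" where
  "frame_potential K P = (\<Sum>k\<in>K. \<Sum>l\<in>K. (mtrace (P k * P l))\<^sup>2)"

definition two_design :: "nat \<Rightarrow> 'k set \<Rightarrow> ('k \<Rightarrow> complex mat) \<Rightarrow> bool" where
  "two_design d K P \<longleftrightarrow> (\<forall>k\<in>K. P k \<in> carrier_mat d d) \<and>
     (\<forall>a<d. \<forall>b<d. \<forall>c<d. \<forall>e<d.
        second_moment K P a b c e = of_nat (card K) / (of_nat d * (of_nat d + 1)) * id_plus_swap a b c e)"

lemma two_design_carrier: "two_design d K P \<Longrightarrow> k \<in> K \<Longrightarrow> P k \<in> carrier_mat d d"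
  by (simp add: two_design_def)

lemma sum4_sum_swap:
  "(\<Sum>a<(d::nat). \<Sum>b<d. \<Sum>c<d. \<Sum>e<d. \<Sum>k\<in>K. G k a b c e :: complex) =
   (\<Sum>k\<in>K. \<Sum>a<d. \<Sum>b<d. \<Sum>c<d. \<Sum>e<d. G k a b c e)"
proof -
  have "(\<Sum>a<d. \<Sum>b<d. \<Sum>c<d. \<Sum>e<d. \<Sum>k\<in>K. G k a b c e) =
        (\<Sum>a<d. \<Sum>b<d. \<Sum>k\<in>K. \<Sum>c<d. \<Sum>e<d. G k a b c e)"
    by (simp add: sum.swap[of _ "{..<d}" K])
  also have "\<dots> = (\<Sum>k\<in>K. \<Sum>a<d. \<Sum>b<d. \<Sum>c<d. \<Sum>e<d. G k a b c e)"
    by (simp add: sum.swap[of _ "{..<d}" K])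
  finally show ?thesis .
qed

lemma tensor_inner_self_eq_0:
  assumes "tensor_inner d F F = 0" "a < d" "b < d" "c < d" "e < d"
  shows "F a b c e = 0"
proof -
  have "complex_of_real (\<Sum>a<d. \<Sum>b<d. \<Sum>c<d. \<Sum>e<d. (cmod (F a b c e))\<^sup>2) = 0"
    using assms(1) by (simp only: tensor_inner_def complex_norm_square[symmetric] of_real_sum)
  then have "(\<Sum>a<d. \<Sum>b<d. \<Sum>c<d. \<Sum>e<d. (cmod (F a b c e))\<^sup>2) = 0"
    by (simp only: of_real_eq_0_iff)
  with assms(2-5) show ?thesis
    by (simp add: sum_nonneg_eq_0_iff sum_nonneg)
qed

lemma tensor_inner_diff_smult:
  "tensor_inner d (\<lambda>a b c e. F a b c e - s * G a b c e) (\<lambda>a b c e. F a b c e - s * G a b c e) =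
   tensor_inner d F F - cnj s * tensor_inner d F G - s * cnj (tensor_inner d F G) + s * cnj s * tensor_inner d G G"
  unfolding tensor_inner_def
  by (simp add: cnj_sum sum_subtractf sum.distrib sum_distrib_left algebra_simps)

lemma tensor_inner_second_moment_left:
  "tensor_inner d (second_moment K P) G = (\<Sum>k\<in>K. tensor_inner d (tensor_square (P k)) G)"
  unfolding tensor_inner_def second_moment_def by (simp add: sum_distrib_right sum4_sum_swap)

lemma cnj_tensor_inner [simp]: "cnj (tensor_inner d F G) = tensor_inner d G F"
  by (simp add: tensor_inner_def cnj_sum mult.commute)

lemma tensor_inner_second_moment_right:
  "tensor_inner d F (second_moment K P) = (\<Sum>k\<in>K. tensor_inner d F (tensor_square (P k)))"
proof -
  have "tensor_inner d F (second_moment K P) = cnj (tensor_inner d (second_moment K P) F)"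
    by simp
  then show ?thesis
    by (simp add: tensor_inner_second_moment_left cnj_sum)
qed

lemma tensor_inner_tensor_square:
  "tensor_inner d (tensor_square A) (tensor_square B) = (\<Sum>a<d. \<Sum>b<d. A $$ (a, b) * cnj (B $$ (a, b)))\<^sup>2"
  unfolding tensor_inner_def tensor_square_def power2_eq_square sum_distrib_left sum_distrib_right
  by (simp add: algebra_simps)

lemma tensor_inner_second_moment_self:
  assumes "\<forall>k\<in>K. hermitian d (P k)"
  shows "tensor_inner d (second_moment K P) (second_moment K P) = frame_potential K P"
proof -
  have "tensor_inner d (second_moment K P) (second_moment K P) =
      (\<Sum>k\<in>K. tensor_inner d (tensor_square (P k)) (second_moment K P))"
    by (rule tensor_inner_second_moment_left)
  also have "\<dots> = (\<Sum>k\<in>K. \<Sum>l\<in>K. tensor_inner d (tensor_square (P k)) (tensor_square (P l)))"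
    by (simp only: tensor_inner_second_moment_right)
  also have "\<dots> = frame_potential K P"
    unfolding tensor_inner_tensor_square frame_potential_def
    using assms by (intro sum.cong refl) (simp add: mtrace_mult_hermitian[symmetric])
  finally show ?thesis .
qed

(* unfolding id_plus_swap under simp makes the splitter loop on its two equality conjunctions *)
lemma cnj_id_plus_swap [simp]: "cnj (id_plus_swap a b c e) = id_plus_swap a b c e"
  by (simp only: id_plus_swap_def complex_cnj_add if_distrib[of cnj] complex_cnj_one complex_cnj_zero)

lemma tensor_inner_id_plus_swap_self:
  "tensor_inner d id_plus_swap id_plus_swap = 2 * of_nat d * (of_nat d + 1)"
proof -
  have "id_plus_swap a a c c = 1 + (if a = c then 1 else 0)" "id_plus_swap a c c a = (if a = c then 1 else 0) + 1"
    for a c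
    by (simp_all add: id_plus_swap_def)
  then have "tensor_inner d id_plus_swap id_plus_swap =
      (\<Sum>a<d. \<Sum>c<d. 1 + (if a = c then 1 else 0)) + (\<Sum>a<d. \<Sum>c<d. (if a = c then 1 else 0) + 1)"
    by (simp add: tensor_inner_def sum4_mult_id_plus_swap)
  also have "\<dots> = 2 * of_nat d * (of_nat d + 1)"
    by (simp add: sum.distrib algebra_simps)
  finally show ?thesis .
qed

lemma tensor_inner_second_moment_id_plus_swap:
  assumes "\<forall>k\<in>K. P k \<in> carrier_mat d d"
  shows "tensor_inner d (second_moment K P) id_plus_swap = (\<Sum>k\<in>K. (mtrace (P k))\<^sup>2 + mtrace (P k * P k))"
  unfolding tensor_inner_second_moment_left
proof (intro sum.cong refl)
  fix k assume "k \<in> K"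
  then have P: "P k \<in> carrier_mat d d" using assms by blast
  have "(\<Sum>a<d. \<Sum>c<d. P k $$ (a, a) * P k $$ (c, c)) = (mtrace (P k))\<^sup>2"
    using P by (simp add: mtrace_def power2_eq_square sum_product)
  then show "tensor_inner d (tensor_square (P k)) id_plus_swap = (mtrace (P k))\<^sup>2 + mtrace (P k * P k)"
    by (simp add: tensor_inner_def tensor_square_def sum4_mult_id_plus_swap mtrace_mult[OF P P])
qed

lemma two_design_if_frame_potential_eq:
  assumes "0 < d"
    and herm: "\<forall>k\<in>K. hermitian d (P k)"
    and trace: "\<forall>k\<in>K. mtrace (P k) = 1"
    and trace_sq: "\<forall>k\<in>K. mtrace (P k * P k) = 1"
    and fp: "frame_potential K P = 2 * of_nat (card K) ^ 2 / (of_nat d * (of_nat d + 1))"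
  shows "two_design d K P"
proof -
  define m :: complex where "m = of_nat d * (of_nat d + 1)"
  define s :: complex where "s = of_nat (card K) / m"
  have "m \<noteq> 0"
    using of_nat_mult_Suc_neq_0[OF \<open>0 < d\<close>] by (simp add: m_def)
  define D where "D = (\<lambda>a b c e. second_moment K P a b c e - s * id_plus_swap a b c e)"
  have carrier: "\<forall>k\<in>K. P k \<in> carrier_mat d d"
    using herm hermitianD(1) by blast
  have "tensor_inner d (second_moment K P) id_plus_swap = 2 * of_nat (card K)"
    using trace trace_sq by (simp add: tensor_inner_second_moment_id_plus_swap[OF carrier])
  moreover have "cnj s = s"
    by (simp add: s_def m_def)
  \<comment> \<open>the squared norm of \<open>D\<close> is the excess of the frame potential over its least value\<close>
  ultimately have "tensor_inner d D D = frame_potential K P - 4 * s * of_nat (card K) + 2 * s\<^sup>2 * m"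
    unfolding D_def tensor_inner_diff_smult
    by (simp add: tensor_inner_second_moment_self[OF herm] tensor_inner_id_plus_swap_self m_def power2_eq_square
        algebra_simps)
  also have "\<dots> = 0"
    using \<open>m \<noteq> 0\<close> fp unfolding m_def[symmetric] by (simp add: s_def field_simps power2_eq_square)
  finally have "D a b c e = 0" if "a < d" "b < d" "c < d" "e < d" for a b c e
    using tensor_inner_self_eq_0 that by blast
  then show ?thesis
    using carrier by (simp add: two_design_def D_def s_def m_def)
qed

lemma two_design_twirl:
  assumes design: "two_design d K P" and X: "X \<in> carrier_mat d d"
  shows "msum d (\<lambda>k. P k * X * P k) K =
    (of_nat (card K) / (of_nat d * (of_nat d + 1))) \<cdot>\<^sub>m (mtrace X \<cdot>\<^sub>m 1\<^sub>m d + X)"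
    (is "_ = ?s \<cdot>\<^sub>m _")
proof (rule eq_matI)
  fix a e assume "a < dim_row (?s \<cdot>\<^sub>m (mtrace X \<cdot>\<^sub>m 1\<^sub>m d + X))" "e < dim_col (?s \<cdot>\<^sub>m (mtrace X \<cdot>\<^sub>m 1\<^sub>m d + X))"
  then have a: "a < d" and e: "e < d"
    using X by auto
  note P = two_design_carrier[OF design]
  have "msum d (\<lambda>k. P k * X * P k) K $$ (a, e) =
      (\<Sum>k\<in>K. \<Sum>b<d. \<Sum>c<d. X $$ (b, c) * tensor_square (P k) a b c e)"
    using a e X P by (simp, intro sum.cong refl) (simp add: index_mult_mult_mat[OF P X P a e] tensor_square_def algebra_simps)
  also have "\<dots> = (\<Sum>b<d. \<Sum>c<d. X $$ (b, c) * second_moment K P a b c e)"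
    by (simp add: second_moment_def sum_distrib_left sum.swap[of _ K])
  also have "\<dots> = ?s * (\<Sum>b<d. \<Sum>c<d. X $$ (b, c) * id_plus_swap a b c e)"
    using design a e by (simp add: two_design_def sum_distrib_left algebra_simps)
  also have "\<dots> = (?s \<cdot>\<^sub>m (mtrace X \<cdot>\<^sub>m 1\<^sub>m d + X)) $$ (a, e)"
    unfolding sum2_mult_id_plus_swap[OF X a e] using a e X by (simp add: algebra_simps)
  finally show "msum d (\<lambda>k. P k * X * P k) K $$ (a, e) = (?s \<cdot>\<^sub>m (mtrace X \<cdot>\<^sub>m 1\<^sub>m d + X)) $$ (a, e)" .
qed (use X in auto)

lemma two_design_mtrace_mult:
  assumes design: "two_design d K P" and E: "E \<in> carrier_mat d d" and S: "S \<in> carrier_mat d d"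
  shows "(\<Sum>k\<in>K. mtrace (P k * E) * mtrace (P k * S)) =
    of_nat (card K) / (of_nat d * (of_nat d + 1)) * (mtrace (E * S) + mtrace E * mtrace S)"
    (is "_ = ?s * _")
proof -
  note P = two_design_carrier[OF design]
  have "(\<Sum>k\<in>K. mtrace (P k * E) * mtrace (P k * S)) =
      (\<Sum>k\<in>K. \<Sum>a<d. \<Sum>b<d. \<Sum>c<d. \<Sum>e<d. E $$ (b, a) * S $$ (e, c) * tensor_square (P k) a b c e)"
  proof (rule sum.cong[OF refl])
    fix k assume "k \<in> K"
    show "mtrace (P k * E) * mtrace (P k * S) =
        (\<Sum>a<d. \<Sum>b<d. \<Sum>c<d. \<Sum>e<d. E $$ (b, a) * S $$ (e, c) * tensor_square (P k) a b c e)"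
      unfolding mtrace_mult[OF P[OF \<open>k \<in> K\<close>] E] mtrace_mult[OF P[OF \<open>k \<in> K\<close>] S] sum_distrib_right
      unfolding sum_distrib_left
      by (simp add: tensor_square_def algebra_simps)
  qed
  also have "\<dots> = (\<Sum>a<d. \<Sum>b<d. \<Sum>c<d. \<Sum>e<d. E $$ (b, a) * S $$ (e, c) * second_moment K P a b c e)"
    by (simp add: second_moment_def sum_distrib_left sum4_sum_swap)
  also have "\<dots> = ?s * (\<Sum>a<d. \<Sum>b<d. \<Sum>c<d. \<Sum>e<d. E $$ (b, a) * S $$ (e, c) * id_plus_swap a b c e)"
    using design by (simp add: two_design_def sum_distrib_left algebra_simps)
  also have "\<dots> = ?s * ((\<Sum>a<d. \<Sum>c<d. E $$ (a, a) * S $$ (c, c)) + (\<Sum>a<d. \<Sum>b<d. E $$ (b, a) * S $$ (a, b)))"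
    by (simp add: sum4_mult_id_plus_swap)
  also have "(\<Sum>a<d. \<Sum>c<d. E $$ (a, a) * S $$ (c, c)) = mtrace E * mtrace S"
    using E S by (simp add: mtrace_def sum_product)
  also have "(\<Sum>a<d. \<Sum>b<d. E $$ (b, a) * S $$ (a, b)) = mtrace (E * S)"
    unfolding mtrace_mult[OF E S] by (rule sum.swap)
  finally show ?thesis
    by (simp add: add.commute)
qed

section \<open>Accessible fidelity of a two-design\<close>

lemma avg_fidelity_two_design:
  assumes design: "two_design d K P" and "card K \<noteq> 0"
    and carrier: "\<forall>b\<in>B. E b \<in> carrier_mat d d \<and> \<sigma> b \<in> carrier_mat d d"
  shows "avg_fidelity K P (\<lambda>_. 1 / real (card K)) B E \<sigma> =
    (\<Sum>b\<in>B. Re (mtrace (E b * \<sigma> b) + mtrace (E b) * mtrace (\<sigma> b))) / (real d * (real d + 1))"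
proof -
  have "(\<Sum>k\<in>K. complex_of_real (1 / real (card K)) * mtrace (P k * E b) * mtrace (P k * \<sigma> b)) =
      complex_of_real (1 / (real d * (real d + 1))) * (mtrace (E b * \<sigma> b) + mtrace (E b) * mtrace (\<sigma> b))"
    if "b \<in> B" for b
  proof -
    have "(\<Sum>k\<in>K. complex_of_real (1 / real (card K)) * mtrace (P k * E b) * mtrace (P k * \<sigma> b)) =
        complex_of_real (1 / real (card K)) * (\<Sum>k\<in>K. mtrace (P k * E b) * mtrace (P k * \<sigma> b))"
      by (simp add: sum_distrib_left mult.assoc)
    also have "\<dots> = complex_of_real (1 / real (card K)) * (of_nat (card K) / (of_nat d * (of_nat d + 1))) *
        (mtrace (E b * \<sigma> b) + mtrace (E b) * mtrace (\<sigma> b))"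
      using carrier that by (simp add: two_design_mtrace_mult[OF design])
    also have "complex_of_real (1 / real (card K)) * (of_nat (card K) / (of_nat d * (of_nat d + 1))) =
        complex_of_real (1 / (real d * (real d + 1)))"
      using \<open>card K \<noteq> 0\<close> by (simp add: field_simps)
    finally show ?thesis .
  qed
  then show ?thesis
    unfolding avg_fidelity_def by (simp add: Re_sum sum_divide_distrib)
qed

lemma avg_fidelity_two_design_le:
  assumes design: "two_design d K P" and "card K \<noteq> 0" and "0 < d"
    and E: "povm d B E" and \<sigma>: "\<forall>b\<in>B. density_op d (\<sigma> b)"
  shows "avg_fidelity K P (\<lambda>_. 1 / real (card K)) B E \<sigma> \<le> 2 / (real d + 1)"
proof -
  have E_psd: "\<And>b. b \<in> B \<Longrightarrow> psd d (E b)" and "finite B" and E_sum: "msum d E B = 1\<^sub>m d"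
    using E by (simp_all add: povm_def)
  have \<sigma>_psd: "\<And>b. b \<in> B \<Longrightarrow> psd d (\<sigma> b)" and \<sigma>_trace: "\<And>b. b \<in> B \<Longrightarrow> mtrace (\<sigma> b) = 1"
    using \<sigma> by (simp_all add: density_op_def)
  have E_carrier: "\<And>b. b \<in> B \<Longrightarrow> E b \<in> carrier_mat d d"
    using E_psd by (simp add: psd_def)
  have "(\<Sum>b\<in>B. Re (mtrace (E b * \<sigma> b) + mtrace (E b) * mtrace (\<sigma> b))) \<le> (\<Sum>b\<in>B. 2 * Re (mtrace (E b)))"
  proof (rule sum_mono)
    fix b assume "b \<in> B"
    then show "Re (mtrace (E b * \<sigma> b) + mtrace (E b) * mtrace (\<sigma> b)) \<le> 2 * Re (mtrace (E b))"
      using psd_Re_mtrace_mult_le[OF E_psd \<sigma>_psd] \<sigma>_trace by simp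
  qed
  also have "\<dots> = 2 * Re (mtrace (msum d E B))"
    by (simp add: mtrace_msum[OF E_carrier] Re_sum sum_distrib_left)
  also have "\<dots> = 2 * real d"
    by (simp add: E_sum mtrace_one_mat)
  finally have sum_le: "(\<Sum>b\<in>B. Re (mtrace (E b * \<sigma> b) + mtrace (E b) * mtrace (\<sigma> b))) \<le> 2 * real d" .
  have "avg_fidelity K P (\<lambda>_. 1 / real (card K)) B E \<sigma> =
      (\<Sum>b\<in>B. Re (mtrace (E b * \<sigma> b) + mtrace (E b) * mtrace (\<sigma> b))) / (real d * (real d + 1))"
    using E_psd \<sigma>_psd by (intro avg_fidelity_two_design[OF design \<open>card K \<noteq> 0\<close>]) (simp add: psd_def)
  also have "\<dots> \<le> 2 * real d / (real d * (real d + 1))"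
    using sum_le by (rule divide_right_mono) simp
  also have "\<dots> = 2 / (real d + 1)"
    using \<open>0 < d\<close> by simp
  finally show ?thesis .
qed

lemma avg_fidelity_two_design_basis_proj:
  assumes design: "two_design d K P" and "card K \<noteq> 0" and "0 < d"
  shows "avg_fidelity K P (\<lambda>_. 1 / real (card K)) {..<d} (basis_proj d) (basis_proj d) = 2 / (real d + 1)"
proof -
  have "mtrace (basis_proj d b * basis_proj d b) = 1" "mtrace (basis_proj d b) = 1" if "b < d" for b
    using rank_one_projector_mult_self[OF rank_one_projector_basis_proj[OF that]]
      mtrace_rank_one_projector[OF rank_one_projector_basis_proj[OF that]]
    by simp_all
  moreover have "basis_proj d b \<in> carrier_mat d d" for b
    by (simp add: basis_proj_def)
  ultimately show ?thesis
    using \<open>0 < d\<close> by (simp add: avg_fidelity_two_design[OF design \<open>card K \<noteq> 0\<close>])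
qed

lemma accessible_fidelity_two_design:
  assumes "two_design d K P" and "card K \<noteq> 0" and "0 < d"
  shows "accessible_fidelity d K P (\<lambda>_. 1 / real (card K)) = 2 / (real d + 1)"
  unfolding accessible_fidelity_def
proof (rule cSup_eq_maximum)
  have "povm d {..<d} (basis_proj d)"
    by (simp add: povm_def msum_basis_proj rank_one_projector_psd rank_one_projector_basis_proj)
  moreover have "\<forall>b\<in>{..<d}. density_op d (basis_proj d b)"
  proof
    fix b assume "b \<in> {..<d}"
    then have "rank_one_projector d (basis_proj d b)"
      by (simp add: rank_one_projector_basis_proj)
    then show "density_op d (basis_proj d b)"
      by (simp add: density_op_def rank_one_projector_psd mtrace_rank_one_projector)
  qed
  ultimately show "2 / (real d + 1) \<in> {avg_fidelity K P (\<lambda>_. 1 / real (card K)) B E \<sigma> | B E \<sigma>.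
      povm d B E \<and> (\<forall>b\<in>B. density_op d (\<sigma> b))}"
    unfolding mem_Collect_eq avg_fidelity_two_design_basis_proj[OF assms, symmetric] by blast
next
  fix x assume "x \<in> {avg_fidelity K P (\<lambda>_. 1 / real (card K)) B E \<sigma> | B E \<sigma>.
      povm d B E \<and> (\<forall>b\<in>B. density_op d (\<sigma> b))}"
  then obtain B E \<sigma> where "x = avg_fidelity K P (\<lambda>_. 1 / real (card K)) B E \<sigma>"
    and "povm d B E" and "\<forall>b\<in>B. density_op d (\<sigma> b)"
    by blast
  then show "x \<le> 2 / (real d + 1)"
    using avg_fidelity_two_design_le[OF assms] by simp
qed

section \<open>Mutually unbiased bases\<close>

lemma mub_frame_potential:
  fixes Proj :: "nat \<Rightarrow> nat \<Rightarrow> complex mat"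
  assumes "0 < d"
    and same: "\<And>j i k. j \<in> {1..d+1} \<Longrightarrow> i \<in> {1..d} \<Longrightarrow> k \<in> {1..d} \<Longrightarrow>
                 mtrace (Proj j i * Proj j k) = (if i = k then 1 else 0)"
    and diff: "\<And>j l i k. j \<in> {1..d+1} \<Longrightarrow> l \<in> {1..d+1} \<Longrightarrow> i \<in> {1..d} \<Longrightarrow> k \<in> {1..d} \<Longrightarrow>
                 j \<noteq> l \<Longrightarrow> mtrace (Proj j i * Proj l k) = 1 / of_nat d"
  shows "frame_potential ({1..d+1} \<times> {1..d}) (\<lambda>(j, i). Proj j i) = 2 * of_nat d * (of_nat d + 1)"
proof -
  have row: "(\<Sum>l\<in>{1..d+1}. \<Sum>m\<in>{1..d}. (mtrace (Proj j i * Proj l m))\<^sup>2) = 2"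
    if j: "j \<in> {1..d+1}" and i: "i \<in> {1..d}" for j i
  proof -
    have "(mtrace (Proj j i * Proj j m))\<^sup>2 = (if i = m then 1 else 0)" if "m \<in> {1..d}" for m
      using j i that by (simp add: same)
    then have "(\<Sum>m\<in>{1..d}. (mtrace (Proj j i * Proj j m))\<^sup>2) = 1"
      using i by simp
    moreover have "(\<Sum>m\<in>{1..d}. (mtrace (Proj j i * Proj l m))\<^sup>2) = 1 / of_nat d" if "l \<in> {1..d+1} - {j}" for l
      using j i that \<open>0 < d\<close> by (simp add: diff power2_eq_square)
    ultimately have "(\<Sum>l\<in>{1..d+1}. \<Sum>m\<in>{1..d}. (mtrace (Proj j i * Proj l m))\<^sup>2) =
        1 + (\<Sum>l\<in>{1..d+1} - {j}. 1 / of_nat d)"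
      using sum.remove[OF finite_atLeastAtMost j, of "\<lambda>l. \<Sum>m\<in>{1..d}. (mtrace (Proj j i * Proj l m))\<^sup>2"]
      by simp
    also have "\<dots> = 2"
      using j \<open>0 < d\<close> by simp
    finally show ?thesis .
  qed
  have "frame_potential ({1..d+1} \<times> {1..d}) (\<lambda>(j, i). Proj j i) =
      (\<Sum>(j, i)\<in>{1..d+1} \<times> {1..d}. \<Sum>l\<in>{1..d+1}. \<Sum>m\<in>{1..d}. (mtrace (Proj j i * Proj l m))\<^sup>2)"
    unfolding frame_potential_def by (simp add: sum.cartesian_product case_prod_beta)
  also have "\<dots> = (\<Sum>(j, i)\<in>{1..d+1} \<times> {1..d}. 2)"
    using row by (intro sum.cong refl) auto
  also have "\<dots> = 2 * of_nat d * (of_nat d + 1)"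
    by (simp add: algebra_simps)
  finally show ?thesis .
qed

lemma mub_two_design:
  fixes Proj :: "nat \<Rightarrow> nat \<Rightarrow> complex mat"
  assumes "0 < d"
    and proj: "\<And>j i. j \<in> {1..d+1} \<Longrightarrow> i \<in> {1..d} \<Longrightarrow> rank_one_projector d (Proj j i)"
    and same: "\<And>j i k. j \<in> {1..d+1} \<Longrightarrow> i \<in> {1..d} \<Longrightarrow> k \<in> {1..d} \<Longrightarrow>
                 mtrace (Proj j i * Proj j k) = (if i = k then 1 else 0)"
    and diff: "\<And>j l i k. j \<in> {1..d+1} \<Longrightarrow> l \<in> {1..d+1} \<Longrightarrow> i \<in> {1..d} \<Longrightarrow> k \<in> {1..d} \<Longrightarrow>
                 j \<noteq> l \<Longrightarrow> mtrace (Proj j i * Proj l k) = 1 / of_nat d"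
  shows "two_design d ({1..d+1} \<times> {1..d}) (\<lambda>(j, i). Proj j i)"
proof (rule two_design_if_frame_potential_eq[OF \<open>0 < d\<close>])
  have "(of_nat (card ({1..d+1} \<times> {1..d})) :: complex) = of_nat d * (of_nat d + 1)"
    by (simp add: algebra_simps)
  with mub_frame_potential[of d Proj, OF \<open>0 < d\<close> same diff] of_nat_mult_Suc_neq_0[OF \<open>0 < d\<close>]
  show "frame_potential ({1..d+1} \<times> {1..d}) (\<lambda>(j, i). Proj j i) =
      2 * of_nat (card ({1..d+1} \<times> {1..d})) ^ 2 / (of_nat d * (of_nat d + 1))"
    by (simp add: power2_eq_square)
qed (use proj in \<open>auto simp: same intro!: rank_one_projector_hermitian mtrace_rank_one_projector[of d]\<close>)

theorem mainTheorem5: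
  fixes d :: nat and Proj :: "nat \<Rightarrow> nat \<Rightarrow> complex mat"
  assumes d2: "d \<ge> 2"
    and proj: "\<And>j i. j \<in> {1..d+1} \<Longrightarrow> i \<in> {1..d} \<Longrightarrow> rank_one_projector d (Proj j i)"
    and same: "\<And>j i k. j \<in> {1..d+1} \<Longrightarrow> i \<in> {1..d} \<Longrightarrow> k \<in> {1..d} \<Longrightarrow>
                 mtrace (Proj j i * Proj j k) = (if i = k then 1 else 0)"
    and diff: "\<And>j l i k. j \<in> {1..d+1} \<Longrightarrow> l \<in> {1..d+1} \<Longrightarrow> i \<in> {1..d} \<Longrightarrow> k \<in> {1..d} \<Longrightarrow>
                 j \<noteq> l \<Longrightarrow> mtrace (Proj j i * Proj l k) = 1 / of_nat d"
  shows "(\<forall>X \<in> carrier_mat d d.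
            msum d (\<lambda>(j,i). (1 / (of_nat d * (of_nat d + 1))) \<cdot>\<^sub>m (Proj j i * X * Proj j i))
                 ({1..d+1} \<times> {1..d})
            = (1 / (of_nat d * (of_nat d + 1))) \<cdot>\<^sub>m (mtrace X \<cdot>\<^sub>m 1\<^sub>m d + X))
         \<and> accessible_fidelity d ({1..d+1} \<times> {1..d}) (\<lambda>(j,i). Proj j i) (\<lambda>_. 1 / (real d * (real d + 1)))
            = 2 / (real d + 1)"
proof -
  define K where "K = {1..d+1} \<times> {1..d}"
  define P where "P = (\<lambda>(j, i). Proj j i :: complex mat)"
  let ?w = "1 / (of_nat d * (of_nat d + 1)) :: complex"
  have "0 < d"
    using d2 by simp
  have design: "two_design d K P"
    unfolding K_def P_def using \<open>0 < d\<close> proj same diff by (rule mub_two_design)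
  have "card K \<noteq> 0" and real_card: "real (card K) = real d * (real d + 1)"
    and weight: "of_nat (card K) / (of_nat d * (of_nat d + 1)) = (1 :: complex)"
    using \<open>0 < d\<close> of_nat_mult_Suc_neq_0[OF \<open>0 < d\<close>] by (simp_all add: K_def algebra_simps)
  have "msum d (\<lambda>(j, i). ?w \<cdot>\<^sub>m (Proj j i * X * Proj j i)) K = ?w \<cdot>\<^sub>m (mtrace X \<cdot>\<^sub>m 1\<^sub>m d + X)"
    if X: "X \<in> carrier_mat d d" for X
  proof -
    have "msum d (\<lambda>(j, i). ?w \<cdot>\<^sub>m (Proj j i * X * Proj j i)) K = ?w \<cdot>\<^sub>m msum d (\<lambda>k. P k * X * P k) K"
      unfolding P_def split_def using two_design_carrier[OF design] X
      by (intro msum_smult) (auto simp: P_def intro!: mult_carrier_mat)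
    also have "msum d (\<lambda>k. P k * X * P k) K = mtrace X \<cdot>\<^sub>m 1\<^sub>m d + X"
      using two_design_twirl[OF design X] X by (simp add: weight) (rule eq_matI, auto)
    finally show ?thesis .
  qed
  moreover have "accessible_fidelity d K P (\<lambda>_. 1 / (real d * (real d + 1))) = 2 / (real d + 1)"
    using accessible_fidelity_two_design[OF design \<open>card K \<noteq> 0\<close> \<open>0 < d\<close>] unfolding real_card .
  ultimately show ?thesis
    unfolding K_def P_def by blast
qed

end
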